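(* Let $n\ge 2$ and let $\mathcal{P}_n$ be the set of partitions of $\{1,\dots,n\}$. The Correlation Distance $\mathrm{CD}:\mathcal{P}_n\times\mathcal{P}_n\to[0,1]$ is a metric on $\mathcal{P}_n$: for all $A,B,C\in\mathcal{P}_n$, $\mathrm{CD}(A,B)=\mathrm{CD}(B,A)$, $\mathrm{CD}(A,B)\ge 0$ with equality if and only if $A=B$, and $\mathrm{CD}(A,C)\le \mathrm{CD}(A,B)+\mathrm{CD}(B,C)$.
   Context: A clustering of $\{1,\dots,n\}$ is a partition $A=\{A_1,\dots,A_{k_A}\}$ into $k_A$ nonempty disjoint clusters. Let $N=\binom n2$. For a clustering $A$, let $\vec A\in\{0,1\}^N$ be the vector indexed by unordered pairs $\{v,w\}$ of distinct elements, whose entry is $1$ iff $v,w$ lie in the same cluster of $A$ (an intra-cluster pair), and let $m_A$ be the number of intra-cluster pairs. Let $\mathbf 1$ be the all-ones vector in $\mathbb R^N$. Define the unit vector $\vec u(A)=\frac{1}{\sqrt N}\mathbf 1$ if $k_A=1$; $\vec u(A)=\frac{\vec A-\frac{m_A}{N}\mathbf 1}{\|\vec A-\frac{m_A}{N}\mathbf 1\|}$ if $1<k_A<n$; $\vec u(A)=-\frac{1}{\sqrt N}\mathbf 1$ if $k_A=n$. The correlation coefficient is $\mathrm{CC}(A,B)=\langle \vec u(A),\vec u(B)\rangle$ (for $1<k_A,k_B<n$ this equals the Pearson correlation $\frac{N_{11}N_{00}-N_{10}N_{01}}{\sqrt{(N_{11}+N_{10})(N_{11}+N_{01})(N_{00}+N_{10})(N_{00}+N_{01})}}$,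 where $N_{11},N_{10},N_{01},N_{00}$ count pairs that are intra in both / intra in $A$ only / intra in $B$ only / intra in neither). The Correlation Distance is $\mathrm{CD}(A,B)=\frac1\pi\arccos\mathrm{CC}(A,B)$. *)

theory Defs
  imports "HOL-Analysis.Analysis" "HOL-Library.Disjoint_Sets"
begin

definition clusterings :: "nat \<Rightarrow> nat set set set" where
  "clusterings n = {A. partition_on {1..n} A}"

definition pairs :: "nat \<Rightarrow> nat set set" where
  "pairs n = {{v, w} | v w. v \<in> {1..n} \<and> w \<in> {1..n} \<and> v \<noteq> w}"

definition NN :: "nat \<Rightarrow> real" where
  "NN n = real (card (pairs n))"

definition cvec :: "nat set set \<Rightarrow> nat set \<Rightarrow> real" where
  "cvec A p = (if \<exists>X\<in>A. p \<subseteq> X then 1 else 0)"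

definition m_intra :: "nat \<Rightarrow> nat set set \<Rightarrow> real" where
  "m_intra n A = real (card {p \<in> pairs n. \<exists>X\<in>A. p \<subseteq> X})"

definition vnorm :: "nat \<Rightarrow> (nat set \<Rightarrow> real) \<Rightarrow> real" where
  "vnorm n x = sqrt (\<Sum>p\<in>pairs n. (x p)\<^sup>2)"

definition uvec :: "nat \<Rightarrow> nat set set \<Rightarrow> nat set \<Rightarrow> real" where
  "uvec n A = (if card A = 1 then (\<lambda>p. 1 / sqrt (NN n))
     else if card A = n then (\<lambda>p. - 1 / sqrt (NN n))
     else (let c = (\<lambda>p. cvec A p - m_intra n A / NN n) in (\<lambda>p. c p / vnorm n c)))"

definition CC :: "nat \<Rightarrow> nat set set \<Rightarrow> nat set set \<Rightarrow> real" where
  "CC n A B = (\<Sum>p\<in>pairs n. uvec n A p * uvec n B p)"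

definition CD :: "nat \<Rightarrow> nat set set \<Rightarrow> nat set set \<Rightarrow> real" where
  "CD n A B = arccos (CC n A B) / pi"

end

theory Submission
  imports Defs
begin

text \<open>For every clustering, u(A) is a unit vector of \<open>\<real>\<^sup>N\<close>: in the degenerate cases by
  definition, otherwise because the centred indicator vector of intra-cluster pairs does not
  vanish. Hence CD(A, B) is the angle between u(A) and u(B) divided by \<open>\<pi>\<close>, i.e.\ the geodesic
  distance on the unit sphere, which satisfies the triangle inequality because the Gram matrix
  of three unit vectors is positive semidefinite. If CD(A, B) = 0 then u(A) = u(B); as u(A) is
  positive exactly on the intra-cluster pairs of A, and a partition is determined by which pairs
  lie in a common block, A = B.\<close>

lemma arccos_le_arccos_add:
  fixes x y z :: real
  assumes "\<bar>x\<bar> \<le> 1" "\<bar>y\<bar> \<le> 1" "\<bar>z\<bar> \<le> 1"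
    and gram: "(z - x * y)\<^sup>2 \<le> (1 - x\<^sup>2) * (1 - y\<^sup>2)"
  shows "arccos z \<le> arccos x + arccos y"
proof (cases "arccos x + arccos y \<ge> pi")
  case True
  then show ?thesis
    using arccos_ubound[of z] assms by (simp add: abs_le_iff)
next
  case False
  define a b where "a = arccos x" and "b = arccos y"
  have "0 \<le> a" "0 \<le> b"
    using assms by (auto simp: a_def b_def abs_le_iff intro!: arccos_lbound)
  have "\<bar>z - x * y\<bar> \<le> sqrt (1 - x\<^sup>2) * sqrt (1 - y\<^sup>2)"
    using real_sqrt_le_mono[OF gram] by (simp add: real_sqrt_mult)
  then have "cos (a + b) \<le> z"
    using assms by (simp add: a_def b_def cos_add sin_arccos_abs abs_le_iff)
  then have "arccos z \<le> arccos (cos (a + b))"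
    using assms by (intro arccos_le_arccos) (auto simp: abs_le_iff)
  also have "\<dots> = a + b"
    using False \<open>0 \<le> a\<close> \<open>0 \<le> b\<close> by (intro arccos_cos) (auto simp: a_def b_def)
  finally show ?thesis
    by (simp add: a_def b_def)
qed

lemma abs_sum_mult_le_1:
  fixes a b :: "'a \<Rightarrow> real"
  assumes "(\<Sum>p\<in>S. (a p)\<^sup>2) = 1" "(\<Sum>p\<in>S. (b p)\<^sup>2) = 1"
  shows "\<bar>\<Sum>p\<in>S. a p * b p\<bar> \<le> 1"
  using Cauchy_Schwarz_ineq_sum[of a b S] assms by (simp add: abs_square_le_1)

lemma sum_mult_eq_1_imp_eq:
  fixes a b :: "'a \<Rightarrow> real"
  assumes "finite S" "(\<Sum>p\<in>S. (a p)\<^sup>2) = 1" "(\<Sum>p\<in>S. (b p)\<^sup>2) = 1"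
    and "(\<Sum>p\<in>S. a p * b p) = 1" and "p \<in> S"
  shows "a p = b p"
proof -
  have "(\<Sum>p\<in>S. (a p - b p)\<^sup>2)
      = (\<Sum>p\<in>S. (a p)\<^sup>2) + (\<Sum>p\<in>S. (b p)\<^sup>2) - 2 * (\<Sum>p\<in>S. a p * b p)"
    by (simp add: power2_diff sum.distrib sum_subtractf sum_distrib_left mult.assoc)
  then have "(\<Sum>p\<in>S. (a p - b p)\<^sup>2) = 0"
    using assms by simp
  then show ?thesis
    using assms(1,5) by (simp add: sum_nonneg_eq_0_iff)
qed

text \<open>The Gram determinant of three unit vectors is nonnegative; here this is Cauchy-Schwarz
  for the components of a and c orthogonal to b.\<close>

lemma arccos_sum_mult_triangle:
  fixes a b c :: "'a \<Rightarrow> real"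
  assumes unit: "(\<Sum>p\<in>S. (a p)\<^sup>2) = 1" "(\<Sum>p\<in>S. (b p)\<^sup>2) = 1" "(\<Sum>p\<in>S. (c p)\<^sup>2) = 1"
  shows "arccos (\<Sum>p\<in>S. a p * c p) \<le> arccos (\<Sum>p\<in>S. a p * b p) + arccos (\<Sum>p\<in>S. b p * c p)"
proof -
  define x y z where "x = (\<Sum>p\<in>S. a p * b p)" and "y = (\<Sum>p\<in>S. b p * c p)"
    and "z = (\<Sum>p\<in>S. a p * c p)"
  have "(\<Sum>p\<in>S. (a p - x * b p) * (c p - y * b p))
      = (\<Sum>p\<in>S. a p * c p) - y * (\<Sum>p\<in>S. a p * b p) - x * (\<Sum>p\<in>S. b p * c p)
        + x * y * (\<Sum>p\<in>S. (b p)\<^sup>2)"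
    by (simp add: algebra_simps sum.distrib sum_subtractf sum_distrib_left
        power2_eq_square)
  then have cross: "(\<Sum>p\<in>S. (a p - x * b p) * (c p - y * b p)) = z - x * y"
    using unit by (simp add: x_def y_def z_def)
  have "(\<Sum>p\<in>S. (a p - x * b p)\<^sup>2)
      = (\<Sum>p\<in>S. (a p)\<^sup>2) - 2 * x * (\<Sum>p\<in>S. a p * b p) + x\<^sup>2 * (\<Sum>p\<in>S. (b p)\<^sup>2)"
    by (simp add: algebra_simps sum.distrib sum_subtractf sum_distrib_left power2_eq_square)
  then have norm_a: "(\<Sum>p\<in>S. (a p - x * b p)\<^sup>2) = 1 - x\<^sup>2"
    using unit by (simp add: x_def power2_eq_square)
  have "(\<Sum>p\<in>S. (c p - y * b p)\<^sup>2)
      = (\<Sum>p\<in>S. (c p)\<^sup>2) - 2 * y * (\<Sum>p\<in>S. b p * c p) + y\<^sup>2 * (\<Sum>p\<in>S. (b p)\<^sup>2)"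
    by (simp add: algebra_simps sum.distrib sum_subtractf sum_distrib_left power2_eq_square)
  then have norm_c: "(\<Sum>p\<in>S. (c p - y * b p)\<^sup>2) = 1 - y\<^sup>2"
    using unit by (simp add: y_def power2_eq_square)
  have "(z - x * y)\<^sup>2 \<le> (1 - x\<^sup>2) * (1 - y\<^sup>2)"
    using Cauchy_Schwarz_ineq_sum[of "\<lambda>p. a p - x * b p" "\<lambda>p. c p - y * b p" S]
    by (simp add: cross norm_a norm_c)
  moreover have "\<bar>x\<bar> \<le> 1" "\<bar>y\<bar> \<le> 1" "\<bar>z\<bar> \<le> 1"
    using abs_sum_mult_le_1 unit by (auto simp: x_def y_def z_def)
  ultimately show ?thesis
    using arccos_le_arccos_add by (simp add: x_def y_def z_def)
qed

lemma finite_pairs: "finite (pairs n)"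
  by (rule finite_subset[of _ "Pow {1..n}"]) (auto simp: pairs_def)

lemma doubleton_in_pairs: "x \<in> {1..n} \<Longrightarrow> y \<in> {1..n} \<Longrightarrow> x \<noteq> y \<Longrightarrow> {x, y} \<in> pairs n"
  by (auto simp: pairs_def)

lemma pairs_subset: "p \<in> pairs n \<Longrightarrow> p \<subseteq> {1..n}"
  by (auto simp: pairs_def)

lemma card_pairs_elem: "p \<in> pairs n \<Longrightarrow> card p = 2"
  by (auto simp: pairs_def)

lemma NN_pos: "n \<ge> 2 \<Longrightarrow> NN n > 0"
  using doubleton_in_pairs[of 1 n 2] finite_pairs[of n]
  by (auto simp: NN_def card_gt_0_iff)

lemma cvec_eq_1_iff: "cvec A p = 1 \<longleftrightarrow> (\<exists>X\<in>A. p \<subseteq> X)"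
  by (simp add: cvec_def)

lemma cvec_eq_0_iff: "cvec A p = 0 \<longleftrightarrow> \<not> (\<exists>X\<in>A. p \<subseteq> X)"
  by (simp add: cvec_def)

lemma partition_on_block_unique:
  "partition_on U A \<Longrightarrow> X \<in> A \<Longrightarrow> Y \<in> A \<Longrightarrow> x \<in> X \<Longrightarrow> x \<in> Y \<Longrightarrow> X = Y"
  using partition_onD2 disjointD by blast

lemma cvec_doubleton_eq_1_iff:
  assumes "partition_on U A" "X \<in> A" "x \<in> X"
  shows "cvec A {x, y} = 1 \<longleftrightarrow> y \<in> X"
  using assms partition_on_block_unique[OF assms(1) _ assms(2)]
  by (auto simp: cvec_eq_1_iff)

lemma card_partition_on_eq_card_iff:
  assumes "finite U" "partition_on U A"
  shows "card A = card U \<longleftrightarrow> (\<forall>X\<in>A. card X = 1)"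
proof -
  have fin: "finite A" "\<And>X. X \<in> A \<Longrightarrow> finite X"
    using finite_elements[OF assms] partition_onD1[OF assms(2)] finite_subset[OF _ assms(1)]
    by auto
  have pos: "\<And>X. X \<in> A \<Longrightarrow> 1 \<le> card X"
    using fin(2) partition_onD3[OF assms(2)] by (fastforce simp: Suc_le_eq card_gt_0_iff)
  have "card U = (\<Sum>X\<in>A. card X)"
    using product_partition[OF assms(2) fin(2)] .
  then have "card A = card U \<longleftrightarrow> (\<Sum>X\<in>A. 1) = (\<Sum>X\<in>A. card X)"
    by simp
  also have "\<dots> \<longleftrightarrow> (\<forall>X\<in>A. card X = 1)"
    using sum_mono_inv[of "\<lambda>_. 1" A card] pos fin(1) by auto
  finally show ?thesis .
qed

lemma all_pairs_intra_iff:
  assumes "n \<ge> 1" and P: "partition_on {1..n} A"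
  shows "(\<forall>p\<in>pairs n. cvec A p = 1) \<longleftrightarrow> card A = 1"
proof
  assume all: "\<forall>p\<in>pairs n. cvec A p = 1"
  have "1 \<in> {1..n}"
    using assms(1) by simp
  then have "1 \<in> \<Union>A"
    using partition_onD1[OF P] by blast
  then obtain X where X: "X \<in> A" "1 \<in> X"
    by blast
  have "Y = X" if "Y \<in> A" for Y
  proof -
    obtain y where "y \<in> Y"
      using \<open>Y \<in> A\<close> partition_onD3[OF P] by (metis ex_in_conv)
    moreover have "y \<in> X"
    proof (cases "y = 1")
      case False
      have "y \<in> {1..n}"
        using partition_onD1[OF P] that \<open>y \<in> Y\<close> by blast
      then have "cvec A {1, y} = 1"
        using all doubleton_in_pairs[of 1 n y] False assms(1) by simp
      then show ?thesis
        using cvec_doubleton_eq_1_iff[OF P X] by blast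
    qed (use X in simp)
    ultimately show ?thesis
      using partition_on_block_unique[OF P that X(1)] by blast
  qed
  then have "A = {X}"
    using X by blast
  then show "card A = 1"
    by simp
next
  assume "card A = 1"
  then obtain X where "A = {X}"
    using card_1_singletonE by blast
  moreover have "X = {1..n}"
    using partition_onD1[OF P] \<open>A = {X}\<close> by simp
  ultimately show "\<forall>p\<in>pairs n. cvec A p = 1"
    using pairs_subset by (simp add: cvec_eq_1_iff)
qed

lemma no_pairs_intra_iff_singletons:
  assumes P: "partition_on {1..n} A"
  shows "(\<forall>p\<in>pairs n. cvec A p = 0) \<longleftrightarrow> (\<forall>X\<in>A. card X = 1)"
proof
  assume none: "\<forall>p\<in>pairs n. cvec A p = 0"
  show "\<forall>X\<in>A. card X = 1"
  proof
    fix X assume X: "X \<in> A"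
    obtain x where x: "x \<in> X"
      using X partition_onD3[OF P] by (metis ex_in_conv)
    have "y = x" if "y \<in> X" for y
    proof (rule ccontr)
      assume "y \<noteq> x"
      moreover have "x \<in> {1..n}" "y \<in> {1..n}"
        using partition_onD1[OF P] X x \<open>y \<in> X\<close> by blast+
      ultimately have "cvec A {x, y} = 0"
        using none doubleton_in_pairs by blast
      moreover have "cvec A {x, y} = 1"
        using cvec_doubleton_eq_1_iff[OF P X x] \<open>y \<in> X\<close> by blast
      ultimately show False
        by simp
    qed
    then have "X = {x}"
      using x by blast
    then show "card X = 1"
      by simp
  qed
next
  assume singletons: "\<forall>X\<in>A. card X = 1"
  show "\<forall>p\<in>pairs n. cvec A p = 0"
  proof (intro ballI)
    fix p assume p: "p \<in> pairs n"
    have "\<not> p \<subseteq> X" if "X \<in> A" for X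
    proof
      assume "p \<subseteq> X"
      moreover have "card X = 1"
        using singletons that by blast
      moreover have "finite X"
        using calculation(2) card.infinite by fastforce
      ultimately have "card p \<le> 1"
        using card_mono by metis
      then show False
        using card_pairs_elem[OF p] by simp
    qed
    then show "cvec A p = 0"
      by (auto simp: cvec_eq_0_iff)
  qed
qed

lemma no_pairs_intra_iff:
  assumes "partition_on {1..n} A"
  shows "(\<forall>p\<in>pairs n. cvec A p = 0) \<longleftrightarrow> card A = n"
  using no_pairs_intra_iff_singletons[OF assms] card_partition_on_eq_card_iff[OF _ assms] by simp

lemma same_block_iff_cvec:
  assumes P: "partition_on U A"
  shows "(\<exists>X\<in>A. x \<in> X \<and> y \<in> X) \<longleftrightarrow> x \<in> U \<and> y \<in> U \<and> (x = y \<or> cvec A {x, y} = 1)"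
proof
  assume "\<exists>X\<in>A. x \<in> X \<and> y \<in> X"
  then obtain X where "X \<in> A" "x \<in> X" "y \<in> X"
    by blast
  then show "x \<in> U \<and> y \<in> U \<and> (x = y \<or> cvec A {x, y} = 1)"
    using partition_onD1[OF P] cvec_doubleton_eq_1_iff[OF P] by blast
next
  assume xy: "x \<in> U \<and> y \<in> U \<and> (x = y \<or> cvec A {x, y} = 1)"
  then obtain X where "X \<in> A" "x \<in> X"
    using partition_onD1[OF P] by blast
  then show "\<exists>X\<in>A. x \<in> X \<and> y \<in> X"
    using xy cvec_doubleton_eq_1_iff[OF P] by blast
qed

text \<open>A partition is the quotient by its same-block relation, which on distinct points
  is read off from the intra-cluster vector.\<close>

lemma partition_eq_if_cvec_eq:
  assumes A: "partition_on {1..n} A" and B: "partition_on {1..n} B"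
    and eq: "\<And>p. p \<in> pairs n \<Longrightarrow> cvec A p = cvec B p"
  shows "A = B"
proof -
  have same_block: "(\<exists>X\<in>A. x \<in> X \<and> y \<in> X) \<longleftrightarrow> (\<exists>Y\<in>B. x \<in> Y \<and> y \<in> Y)" for x y
  proof (cases "x \<in> {1..n} \<and> y \<in> {1..n} \<and> x \<noteq> y")
    case True
    then have "cvec A {x, y} = cvec B {x, y}"
      by (intro eq doubleton_in_pairs) auto
    then show ?thesis
      using same_block_iff_cvec[OF A, of x y] same_block_iff_cvec[OF B, of x y] by simp
  next
    case False
    then show ?thesis
      using same_block_iff_cvec[OF A, of x y] same_block_iff_cvec[OF B, of x y] by auto
  qed
  have rel: "{(x, y). \<exists>X\<in>A. x \<in> X \<and> y \<in> X} = {(x, y). \<exists>Y\<in>B. x \<in> Y \<and> y \<in> Y}"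
    by (simp only: same_block)
  have "A = {1..n} // {(x, y). \<exists>X\<in>A. x \<in> X \<and> y \<in> X}"
    using partition_on_eq_quotient[OF A] by simp
  also have "\<dots> = B"
    unfolding rel using partition_on_eq_quotient[OF B] .
  finally show ?thesis .
qed

lemma cvec_eq_0_or_1: "cvec A p = 0 \<or> cvec A p = 1"
  by (simp add: cvec_def)

lemma intra_fraction_bounds:
  assumes "n \<ge> 2" and P: "partition_on {1..n} A" and "card A \<noteq> 1" "card A \<noteq> n"
  shows "0 < m_intra n A / NN n" "m_intra n A / NN n < 1"
proof -
  let ?I = "{p \<in> pairs n. \<exists>X\<in>A. p \<subseteq> X}"
  obtain p0 where p0: "p0 \<in> pairs n" "cvec A p0 \<noteq> 1"
    using all_pairs_intra_iff[OF _ P] assms(1,3) by auto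
  then have "p0 \<notin> ?I"
    by (simp add: cvec_eq_1_iff)
  then have "?I \<subset> pairs n"
    using p0(1) by blast
  then have less: "card ?I < card (pairs n)"
    using psubset_card_mono finite_pairs by blast
  obtain p1 where p1: "p1 \<in> pairs n" "cvec A p1 \<noteq> 0"
    using no_pairs_intra_iff[OF P] assms(4) by auto
  then have "p1 \<in> ?I"
    by (simp add: cvec_eq_0_iff)
  then have "card ?I > 0"
    using finite_pairs by (auto simp: card_gt_0_iff)
  with less show "0 < m_intra n A / NN n" "m_intra n A / NN n < 1"
    unfolding m_intra_def NN_def by simp_all
qed

lemma vnorm_pos:
  assumes "p \<in> pairs n" "c p \<noteq> 0"
  shows "vnorm n c > 0"
proof -
  have "(c p)\<^sup>2 \<le> (\<Sum>q\<in>pairs n. (c q)\<^sup>2)"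
    by (rule member_le_sum[OF assms(1)]) (simp_all add: finite_pairs)
  moreover have "0 < (c p)\<^sup>2"
    using assms(2) by simp
  ultimately show ?thesis
    unfolding vnorm_def by (intro real_sqrt_gt_zero) linarith
qed

lemma sum_power2_div_vnorm:
  assumes "vnorm n c \<noteq> 0"
  shows "(\<Sum>p\<in>pairs n. (c p / vnorm n c)\<^sup>2) = 1"
proof -
  have sq: "(vnorm n c)\<^sup>2 = (\<Sum>p\<in>pairs n. (c p)\<^sup>2)"
    unfolding vnorm_def by (simp add: sum_nonneg)
  have "(\<Sum>p\<in>pairs n. (c p / vnorm n c)\<^sup>2) = (\<Sum>p\<in>pairs n. (c p)\<^sup>2) / (vnorm n c)\<^sup>2"
    by (simp add: power_divide sum_divide_distrib)
  also have "\<dots> = 1"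
    using assms by (simp add: sq [symmetric])
  finally show ?thesis .
qed

lemma sum_power2_div_sqrt_NN:
  assumes "n \<ge> 2"
  shows "(\<Sum>p\<in>pairs n. (k / sqrt (NN n))\<^sup>2) = k\<^sup>2"
proof -
  have "(\<Sum>p\<in>pairs n. (k / sqrt (NN n))\<^sup>2) = NN n * (k\<^sup>2 / NN n)"
    using NN_pos[OF assms] by (simp add: NN_def power_divide)
  also have "\<dots> = k\<^sup>2"
    using NN_pos[OF assms] by simp
  finally show ?thesis .
qed

text \<open>Away from the two degenerate clusterings the centring constant q = m_A / N lies strictly
  between 0 and 1, so no entry of the centred vector vanishes.\<close>

lemma uvec_nondegenerate:
  assumes "n \<ge> 2" "partition_on {1..n} A" "card A \<noteq> 1" "card A \<noteq> n"
  obtains q where "0 < q" "q < 1" "vnorm n (\<lambda>p. cvec A p - q) > 0"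
    "uvec n A = (\<lambda>p. (cvec A p - q) / vnorm n (\<lambda>p. cvec A p - q))"
proof
  let ?q = "m_intra n A / NN n"
  show "0 < ?q" "?q < 1"
    using intra_fraction_bounds[OF assms] by auto
  then have "cvec A {1, 2} - ?q \<noteq> 0"
    using cvec_eq_0_or_1[of A "{1, 2}"] by auto
  then show "vnorm n (\<lambda>p. cvec A p - ?q) > 0"
    using vnorm_pos[of "{1, 2}" n "\<lambda>p. cvec A p - ?q"] doubleton_in_pairs[of 1 n 2] assms(1)
    by simp
  show "uvec n A = (\<lambda>p. (cvec A p - ?q) / vnorm n (\<lambda>p. cvec A p - ?q))"
    using assms(3,4) by (simp add: uvec_def)
qed

lemma uvec_unit:
  assumes "n \<ge> 2" "partition_on {1..n} A"
  shows "(\<Sum>p\<in>pairs n. (uvec n A p)\<^sup>2) = 1"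
proof (cases "card A = 1 \<or> card A = n")
  case True
  then show ?thesis
    using sum_power2_div_sqrt_NN[OF assms(1), of 1] sum_power2_div_sqrt_NN[OF assms(1), of "- 1"]
    by (auto simp: uvec_def)
next
  case False
  then obtain q where "vnorm n (\<lambda>p. cvec A p - q) > 0"
    "uvec n A = (\<lambda>p. (cvec A p - q) / vnorm n (\<lambda>p. cvec A p - q))"
    using uvec_nondegenerate[OF assms] by blast
  then show ?thesis
    using sum_power2_div_vnorm by simp
qed

lemma uvec_pos_iff:
  assumes "n \<ge> 2" and P: "partition_on {1..n} A" and p: "p \<in> pairs n"
  shows "uvec n A p > 0 \<longleftrightarrow> cvec A p = 1"
proof -
  consider "card A = 1" | "card A \<noteq> 1" "card A = n" | "card A \<noteq> 1" "card A \<noteq> n"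
    by blast
  then show ?thesis
  proof cases
    case 1
    then show ?thesis
      using all_pairs_intra_iff[OF _ P] assms(1) p NN_pos[OF assms(1)] by (simp add: uvec_def)
  next
    case 2
    then show ?thesis
      using no_pairs_intra_iff[OF P] p NN_pos[OF assms(1)] by (simp add: uvec_def)
  next
    case 3
    then obtain q where "0 < q" "q < 1" "vnorm n (\<lambda>p. cvec A p - q) > 0"
      "uvec n A = (\<lambda>p. (cvec A p - q) / vnorm n (\<lambda>p. cvec A p - q))"
      using uvec_nondegenerate[OF assms(1) P] by blast
    then show ?thesis
      using cvec_eq_0_or_1[of A p] by (auto simp: zero_less_divide_iff)
  qed
qed

lemma abs_CC_le_1:
  assumes "n \<ge> 2" "partition_on {1..n} A" "partition_on {1..n} B"
  shows "\<bar>CC n A B\<bar> \<le> 1"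
  unfolding CC_def using abs_sum_mult_le_1 uvec_unit assms by blast

lemma CC_eq_1_iff:
  assumes n: "n \<ge> 2" and A: "partition_on {1..n} A" and B: "partition_on {1..n} B"
  shows "CC n A B = 1 \<longleftrightarrow> A = B"
proof
  assume "CC n A B = 1"
  then have "uvec n A p = uvec n B p" if "p \<in> pairs n" for p
    using sum_mult_eq_1_imp_eq[OF finite_pairs uvec_unit[OF n A] uvec_unit[OF n B]] that
    by (simp add: CC_def)
  then have "cvec A p = cvec B p" if "p \<in> pairs n" for p
    using uvec_pos_iff[OF n A that] uvec_pos_iff[OF n B that] that
      cvec_eq_0_or_1[of A p] cvec_eq_0_or_1[of B p] by auto
  then show "A = B"
    using partition_eq_if_cvec_eq[OF A B] by blast
next
  assume "A = B"
  then show "CC n A B = 1"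
    using uvec_unit[OF n A] by (simp add: CC_def power2_eq_square)
qed

lemma CD_eq_0_iff:
  assumes "n \<ge> 2" "partition_on {1..n} A" "partition_on {1..n} B"
  shows "CD n A B = 0 \<longleftrightarrow> A = B"
  using arccos_eq_iff[of "CC n A B" 1] abs_CC_le_1[OF assms] CC_eq_1_iff[OF assms]
  by (simp add: CD_def)

lemma CD_triangle:
  assumes "n \<ge> 2" "partition_on {1..n} A" "partition_on {1..n} B" "partition_on {1..n} C"
  shows "CD n A C \<le> CD n A B + CD n B C"
proof -
  have "arccos (CC n A C) \<le> arccos (CC n A B) + arccos (CC n B C)"
    unfolding CC_def using arccos_sum_mult_triangle uvec_unit assms by blast
  then show ?thesis
    by (simp add: CD_def divide_right_mono flip: add_divide_distrib)
qed

theorem theorem1: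
  fixes n :: nat
  assumes "n \<ge> 2"
  shows "\<forall>A\<in>clusterings n. \<forall>B\<in>clusterings n. \<forall>C\<in>clusterings n.
           CD n A B \<in> {0..1} \<and>
           CD n A B = CD n B A \<and>
           CD n A B \<ge> 0 \<and> (CD n A B = 0 \<longleftrightarrow> A = B) \<and>
           CD n A C \<le> CD n A B + CD n B C"
proof (intro ballI)
  fix A B C
  assume "A \<in> clusterings n" "B \<in> clusterings n" "C \<in> clusterings n"
  then have A: "partition_on {1..n} A" and B: "partition_on {1..n} B"
    and C: "partition_on {1..n} C"
    by (auto simp: clusterings_def)
  have "0 \<le> CD n A B" "CD n A B \<le> 1"
    using abs_CC_le_1[OF assms A B] arccos_lbound arccos_ubound
    by (auto simp: CD_def abs_le_iff)
  moreover have "CD n A B = CD n B A"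
    by (simp add: CD_def CC_def mult.commute)
  ultimately show "CD n A B \<in> {0..1} \<and> CD n A B = CD n B A \<and> CD n A B \<ge> 0 \<and>
      (CD n A B = 0 \<longleftrightarrow> A = B) \<and> CD n A C \<le> CD n A B + CD n B C"
    using CD_eq_0_iff[OF assms A B] CD_triangle[OF assms A B C] by simp
qed

end
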